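(* For each $\ell\geq 3$ there are infinitely many $4$-critical graphs of odd-girth $>\ell$, forming a family of quadratic edge density; in particular $c_{\ell,4}\geq \frac{1}{(\ell+1)^2}$.
   Context: A graph is $k$-critical if it has chromatic number $k$ and removing any edge allows it to be properly $(k-1)$-colored. The odd-girth of a graph is the length of a shortest odd cycle. For integers $\ell\geq 3$, $k\geq 4$, the density constant $c_{\ell,k}$ is the supremum of the constants $c$ such that there are infinitely many $k$-critical graphs of odd-girth $>\ell$, each having more than $cn^2$ edges, where $n$ is its number of vertices. *)

theory Defs
  imports Complex_Main
begin

definition graph :: "nat \<Rightarrow> (nat \<Rightarrow> nat \<Rightarrow> bool) \<Rightarrow> bool" where
  "graph n E \<longleftrightarrow> (\<forall>u v. E u v \<longrightarrow> u < n \<and> v < n \<and> u \<noteq> v \<and> E v u)"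

definition num_edges :: "nat \<Rightarrow> (nat \<Rightarrow> nat \<Rightarrow> bool) \<Rightarrow> nat" where
  "num_edges n E = card {(u, v). u < v \<and> v < n \<and> E u v}"

definition colorable :: "nat \<Rightarrow> (nat \<Rightarrow> nat \<Rightarrow> bool) \<Rightarrow> nat \<Rightarrow> bool" where
  "colorable n E k \<longleftrightarrow> (\<exists>f :: nat \<Rightarrow> nat. (\<forall>v<n. f v < k) \<and> (\<forall>u v. E u v \<longrightarrow> f u \<noteq> f v))"

definition chromatic_number :: "nat \<Rightarrow> (nat \<Rightarrow> nat \<Rightarrow> bool) \<Rightarrow> nat" where
  "chromatic_number n E = (LEAST k. colorable n E k)"

definition remove_edge :: "(nat \<Rightarrow> nat \<Rightarrow> bool) \<Rightarrow> nat \<Rightarrow> nat \<Rightarrow> nat \<Rightarrow> nat \<Rightarrow> bool" where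
  "remove_edge E a b = (\<lambda>u v. E u v \<and> \<not> ((u = a \<and> v = b) \<or> (u = b \<and> v = a)))"

definition critical :: "nat \<Rightarrow> nat \<Rightarrow> (nat \<Rightarrow> nat \<Rightarrow> bool) \<Rightarrow> bool" where
  "critical k n E \<longleftrightarrow> graph n E \<and> chromatic_number n E = k \<and>
     (\<forall>a b. E a b \<longrightarrow> colorable n (remove_edge E a b) (k - 1))"

definition is_cycle :: "nat \<Rightarrow> (nat \<Rightarrow> nat \<Rightarrow> bool) \<Rightarrow> nat list \<Rightarrow> bool" where
  "is_cycle n E cs \<longleftrightarrow> length cs \<ge> 3 \<and> distinct cs \<and> set cs \<subseteq> {..<n} \<and>
     (\<forall>i < length cs. E (cs ! i) (cs ! ((i + 1) mod length cs)))"

text \<open>Odd-girth > l: every odd cycle has length > l (vacuous if there are no odd cycles,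
  i.e. odd-girth infinite).\<close>
definition odd_girth_gt :: "nat \<Rightarrow> (nat \<Rightarrow> nat \<Rightarrow> bool) \<Rightarrow> nat \<Rightarrow> bool" where
  "odd_girth_gt n E l \<longleftrightarrow> (\<forall>cs. is_cycle n E cs \<and> odd (length cs) \<longrightarrow> length cs > l)"

text \<open>"Infinitely many graphs with property P" (up to isomorphism) is expressed as:
  for every N there is such a graph with at least N vertices (there are only finitely many
  graphs on a given number of vertices).\<close>
definition density_const :: "nat \<Rightarrow> nat \<Rightarrow> real" where
  "density_const l k = Sup {c :: real. \<forall>N. \<exists>n \<ge> N. \<exists>E.
      critical k n E \<and> odd_girth_gt n E l \<and> real (num_edges n E) > c * (real n)^2}"

end

theory Submission
  imports Defs
begin

text \<open>The graphs consist of two copies of the generalised Mycielskian of an odd cycle \<open>C\<^sub>m\<close>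
  with \<open>s\<close> layers in which the apex is replaced by an independent set of \<open>m\<close> vertices, each joined
  to its twin in the last layer; the two independent sets are joined completely. With
  \<open>n = 2 (s + 2) m\<close> vertices there are at least \<open>m\<^sup>2 = n\<^sup>2 / (2 s + 4)\<^sup>2\<close> edges.

  In a 3-colouring one side of the complete bipartite part is monochromatic and acts as an apex.
  This is impossible by the winding argument for Mycielskians: the winding of the colours around
  \<open>\<int>/3\<close> along a layer is the same on all layers, odd on the base cycle and zero on a layer that
  misses a colour. Deleting any edge leaves an explicit 3-colouring. Away from the base cycles the
  graph is bipartite, so an odd cycle uses a base edge; it either stays below the apex layers and
  projects to an odd closed walk on \<open>C\<^sub>m\<close>, of length at least \<open>m\<close>, or climbs to an apex layer and
  back, which takes at least \<open>2 s + 5\<close> steps. Take \<open>s = (l - 3) div 2\<close> and \<open>m\<close> large.\<close>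

section \<open>Colourings of an odd cycle\<close>

locale odd_cycle =
  fixes m :: nat
  assumes m_odd: "odd m" and m_ge: "3 \<le> m"
begin

definition cyc_adj :: "nat \<Rightarrow> nat \<Rightarrow> bool" where
  "cyc_adj i i' \<longleftrightarrow> i' = Suc i mod m \<or> i = Suc i' mod m"

definition offset :: "nat \<Rightarrow> nat \<Rightarrow> nat" where
  "offset d i = (i + m - d) mod m"

lemma m_pos: "0 < m"
  using m_ge by simp

lemma cyc_adj_sym: "cyc_adj i i' \<Longrightarrow> cyc_adj i' i"
  unfolding cyc_adj_def by auto

lemma Suc_mod_lt: "Suc i mod m < m"
  using m_pos by simp

lemma Suc_mod_inj: "i < m \<Longrightarrow> j < m \<Longrightarrow> Suc i mod m = Suc j mod m \<Longrightarrow> i = j"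
  by (metis Suc_lessI mod_Suc mod_less nat.inject nat.simps(3))

lemma Suc_mod_neq: assumes "i < m" shows "Suc i mod m \<noteq> i"
proof (cases "Suc i < m")
  case False
  then have "Suc i = m" using assms by simp
  then show ?thesis using m_ge by simp
qed simp

lemma offset_lt: "offset d i < m"
  unfolding offset_def using m_pos by simp

lemma offset_Suc: assumes "d \<le> m" shows "offset d (Suc i mod m) = Suc (offset d i) mod m"
proof -
  have "offset d (Suc i mod m) = (Suc i mod m + (m - d)) mod m" unfolding offset_def using assms by simp
  also have "\<dots> = Suc ((i + (m - d)) mod m) mod m" by (simp add: mod_add_left_eq mod_Suc_eq)
  finally show ?thesis unfolding offset_def using assms by simp
qed

lemma offset_eq_0_iff: assumes "i < m" "d < m" shows "offset d i = 0 \<longleftrightarrow> i = d"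
proof
  assume h: "offset d i = 0"
  show "i = d"
  proof (cases "d \<le> i")
    case True
    then have "i + m - d = (i - d) + m" by simp
    then have "(i - d) mod m = 0" using h unfolding offset_def by simp
    then show ?thesis using True assms by simp
  next
    case False
    then have "i + m - d < m" "0 < i + m - d" using assms by auto
    then show ?thesis using h unfolding offset_def by simp
  qed
qed (simp add: offset_def)

lemma offset_Suc_self: "d < m \<Longrightarrow> offset d (Suc d mod m) = 1"
  using offset_Suc[of d d] offset_eq_0_iff[of d d] m_ge by simp

text \<open>Colour \<open>x\<close> at \<open>d\<close>, then alternately \<open>y\<close> and \<open>z\<close> around the cycle; as \<open>m\<close> is odd,
  the vertex before \<open>d\<close> again receives \<open>z\<close>.\<close>
definition cyc_col :: "nat \<Rightarrow> nat \<Rightarrow> nat \<Rightarrow> nat \<Rightarrow> nat \<Rightarrow> nat" where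
  "cyc_col x y z d i = (if i = d then x else if odd (offset d i) then y else z)"

lemma cyc_col_proper:
  assumes "x \<noteq> y" "y \<noteq> z" "x \<noteq> z" "d < m" "i < m"
  shows "cyc_col x y z d i \<noteq> cyc_col x y z d (Suc i mod m)"
proof -
  let ?k = "offset d i"
  have k: "offset d (Suc i mod m) = Suc ?k mod m" using offset_Suc assms by simp
  show ?thesis
  proof (cases "?k = m - 1")
    case True
    then have "Suc i mod m = d" using k offset_eq_0_iff[OF Suc_mod_lt assms(4)] m_pos by simp
    moreover have "i \<noteq> d" using True offset_eq_0_iff[OF assms(5,4)] m_ge by simp
    moreover have "even ?k" using True m_odd m_ge by simp
    ultimately show ?thesis unfolding cyc_col_def using assms by auto
  next
    case False
    then have k2: "offset d (Suc i mod m) = Suc ?k" using k offset_lt[of d i] by simp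
    then have "Suc i mod m \<noteq> d" using offset_eq_0_iff[OF Suc_mod_lt[of i] assms(4)] by simp
    then show ?thesis unfolding cyc_col_def using k2 assms offset_eq_0_iff[OF assms(5,4)] by auto
  qed
qed

lemma cyc_col_lt: "x < 3 \<Longrightarrow> y < 3 \<Longrightarrow> z < 3 \<Longrightarrow> cyc_col x y z d i < 3"
  unfolding cyc_col_def by auto

lemma cyc_col_at: "cyc_col x y z d d = x"
  unfolding cyc_col_def by simp

lemma cyc_col_other: "i \<noteq> d \<Longrightarrow> cyc_col x y z d i = y \<or> cyc_col x y z d i = z"
  unfolding cyc_col_def by auto

lemma cyc_col_Suc_Suc: assumes "d < m" shows "cyc_col x y z d (Suc (Suc d mod m) mod m) = z"
proof -
  have "offset d (Suc (Suc d mod m) mod m) = 2"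
    using offset_Suc[of d "Suc d mod m"] offset_Suc_self assms m_ge by simp
  moreover have "Suc (Suc d mod m) mod m \<noteq> d"
    using calculation offset_eq_0_iff[OF Suc_mod_lt[of "Suc d mod m"] assms] by auto
  ultimately show ?thesis unfolding cyc_col_def by simp
qed

lemma cyc_col_before_pred: assumes "d < m" "i < m" "Suc (Suc i mod m) mod m = d"
  shows "cyc_col x y z d i = y"
proof -
  have "offset d (Suc (Suc i mod m) mod m) = 0"
    using assms offset_eq_0_iff[OF Suc_mod_lt[of "Suc i mod m"] assms(1)] by simp
  then have "Suc (Suc (offset d i) mod m) mod m = 0"
    using offset_Suc[of d "Suc i mod m"] offset_Suc[of d i] assms(1) by simp
  then have "offset d i = m - 2"
    using offset_lt[of d i] m_ge by (cases "Suc (offset d i) < m") (auto simp: mod_Suc split: if_splits)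
  moreover have "i \<noteq> d" using calculation offset_eq_0_iff[OF assms(2,1)] m_ge by simp
  ultimately show ?thesis unfolding cyc_col_def using m_odd m_ge by auto
qed

lemma cyc_col_012_proper: "\<forall>i<m. cyc_col 0 1 2 0 i \<noteq> cyc_col 0 1 2 0 (Suc i mod m)"
  using cyc_col_proper[of 0 1 2 0] m_pos by simp

text \<open>A 2-colouring of the path obtained from \<open>C\<^sub>m\<close> by deleting the edge \<open>{p, p + 1}\<close>.\<close>
definition arc_col :: "nat \<Rightarrow> nat \<Rightarrow> nat \<Rightarrow> nat \<Rightarrow> nat" where
  "arc_col y z p i = (if even (offset (Suc p mod m) i) then y else z)"

lemma arc_col_proper:
  assumes "y \<noteq> z" "p < m" "i < m" "i \<noteq> p"
  shows "arc_col y z p i \<noteq> arc_col y z p (Suc i mod m)"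
proof -
  let ?d = "Suc p mod m"
  let ?k = "offset ?d i"
  have k: "offset ?d (Suc i mod m) = Suc ?k mod m"
    using offset_Suc[of ?d i] Suc_mod_lt[of p] by simp
  have "?k \<noteq> m - 1"
  proof
    assume "?k = m - 1"
    then have "Suc i mod m = ?d"
      using k m_pos offset_eq_0_iff[OF Suc_mod_lt[of i] Suc_mod_lt[of p]] by simp
    then show False using Suc_mod_inj assms by blast
  qed
  then have "offset ?d (Suc i mod m) = Suc ?k"
    using k offset_lt[of ?d i] by simp
  then show ?thesis unfolding arc_col_def using assms by auto
qed

end

section \<open>Winding of 3-colourings\<close>

lemma sum_shift_periodic:
  fixes F :: "nat \<Rightarrow> 'a::cancel_comm_monoid_add"
  assumes "F m = F 0"
  shows "(\<Sum>i<m. F (Suc i)) = (\<Sum>i<m. F i)"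
proof -
  have "F 0 + (\<Sum>i<m. F (Suc i)) = (\<Sum>i<m. F i) + F m"
    using sum.lessThan_Suc_shift[of F m] by simp
  then show ?thesis using assms by (simp add: add.commute)
qed

lemma sum_plus_minus_one_even_iff:
  fixes f :: "nat \<Rightarrow> int"
  assumes "\<forall>i<n. f i = 1 \<or> f i = -1"
  shows "even (\<Sum>i<n. f i) \<longleftrightarrow> even n"
  using assms
proof (induction n)
  case (Suc n)
  then have "even (\<Sum>i<n. f i) \<longleftrightarrow> even n" "f n = 1 \<or> f n = -1" by simp_all
  then show ?case by auto
qed simp

lemma sum_plus_minus_one_abs_le:
  fixes f :: "nat \<Rightarrow> int"
  assumes "\<forall>i<n. f i = 1 \<or> f i = -1"
  shows "\<bar>\<Sum>i<n. f i\<bar> \<le> int n"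
  using assms
proof (induction n)
  case (Suc n)
  then have "\<bar>\<Sum>i<n. f i\<bar> \<le> int n" "f n = 1 \<or> f n = -1" by simp_all
  then show ?case by auto
qed simp

text \<open>Winding in \<open>\<int>/3\<close>: \<open>turn a b\<close> is the step \<open>b - a \<in> {1, -1}\<close> between two distinct
  colours, \<open>turn2\<close> the total of two consecutive steps, which only depends on the end points.\<close>
definition turn :: "nat \<Rightarrow> nat \<Rightarrow> int" where
  "turn a b = (if b = (a + 1) mod 3 then 1 else -1)"

definition turn2 :: "nat \<Rightarrow> nat \<Rightarrow> int" where
  "turn2 a c = (if a = c then 0 else -2 * turn a c)"

definition potential :: "nat \<Rightarrow> nat \<Rightarrow> int" where
  "potential a x = (if x = (a + 1) mod 3 then 0 else -1)"

lemma turn_plus_minus_one: "turn a b = 1 \<or> turn a b = -1"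
  unfolding turn_def by auto

lemma less_3_iff: "(x::nat) < 3 \<longleftrightarrow> x \<in> {0, 1, 2}"
  by auto

lemma turn_add:
  assumes "a < 3" "b < 3" "c < 3" "a \<noteq> b" "b \<noteq> c"
  shows "turn a b + turn b c = turn2 a c"
proof -
  have "\<forall>a\<in>{0,1,2}. \<forall>b\<in>{0,1,2}. \<forall>c\<in>{0::nat,1,2}.
      a \<noteq> b \<longrightarrow> b \<noteq> c \<longrightarrow> turn a b + turn b c = turn2 a c"
    unfolding turn_def turn2_def by simp
  then show ?thesis using assms less_3_iff by blast
qed

text \<open>Steps that avoid the colour \<open>a\<close> cannot wind around it.\<close>
lemma turn2_avoiding:
  assumes "a < 3" "x < 3" "y < 3" "x \<noteq> a" "y \<noteq> a"
  shows "turn2 x y = 2 * (potential a y - potential a x)"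
proof -
  have "\<forall>a\<in>{0,1,2}. \<forall>x\<in>{0,1,2}. \<forall>y\<in>{0::nat,1,2}.
      x \<noteq> a \<longrightarrow> y \<noteq> a \<longrightarrow> turn2 x y = 2 * (potential a y - potential a x)"
    unfolding turn_def turn2_def potential_def by simp
  then show ?thesis using assms less_3_iff by blast
qed

context odd_cycle
begin

lemma sum_rotate:
  fixes f :: "nat \<Rightarrow> 'a::cancel_comm_monoid_add"
  shows "(\<Sum>i<m. f (Suc i mod m)) = (\<Sum>i<m. f i)"
proof -
  have "(\<Sum>i<m. f (Suc i mod m)) = (\<Sum>i<m. f (i mod m))"
    using sum_shift_periodic[of "\<lambda>i. f (i mod m)" m] by simp
  then show ?thesis by simp
qed

text \<open>Twice the winding number of a row of colours around \<open>\<int>/3\<close>, computed from steps of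
  length two so that it also makes sense for rows that are not proper colourings of the cycle.\<close>
definition winding :: "(nat \<Rightarrow> nat) \<Rightarrow> int" where
  "winding r = (\<Sum>i<m. turn2 (r i) (r (Suc (Suc i mod m) mod m)))"

lemma winding_proper_row_neq_0:
  assumes lt: "\<forall>i<m. r i < 3" and proper: "\<forall>i<m. r i \<noteq> r (Suc i mod m)"
  shows "winding r \<noteq> 0"
proof -
  define D where "D i = turn (r i) (r (Suc i mod m))" for i
  have "turn2 (r i) (r (Suc (Suc i mod m) mod m)) = D i + D (Suc i mod m)" if "i < m" for i
    unfolding D_def
    using that by (intro turn_add[symmetric]) (simp_all add: lt proper Suc_mod_lt)
  then have "winding r = (\<Sum>i<m. D i) + (\<Sum>i<m. D (Suc i mod m))"
    unfolding winding_def by (simp add: sum.distrib)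
  also have "\<dots> = 2 * (\<Sum>i<m. D i)"
    by (simp add: sum_rotate)
  finally show ?thesis
    using sum_plus_minus_one_even_iff[of m D] m_odd by (auto simp: D_def turn_plus_minus_one)
qed

lemma winding_avoiding_colour:
  assumes "a < 3" and lt: "\<forall>i<m. r i < 3" and avoid: "\<forall>i<m. r i \<noteq> a"
  shows "winding r = 0"
proof -
  define P where "P i = potential a (r i)" for i
  have "turn2 (r i) (r (Suc (Suc i mod m) mod m)) = 2 * (P (Suc (Suc i mod m) mod m) - P i)" if "i < m" for i
    unfolding P_def using turn2_avoiding[OF \<open>a < 3\<close>] that lt avoid m_pos by simp
  moreover have "(\<Sum>i<m. P (Suc (Suc i mod m) mod m)) = (\<Sum>i<m. P i)"
    using sum_rotate[of "\<lambda>i. P (Suc i mod m)"] sum_rotate[of P] by simp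
  ultimately show ?thesis
    unfolding winding_def by (simp add: sum_subtractf sum_distrib_left[symmetric])
qed

lemma winding_next_row:
  assumes lt: "\<forall>i<m. r i < 3" "\<forall>i<m. r' i < 3"
    and layer: "\<forall>i<m. r' i \<noteq> r (Suc i mod m) \<and> r' (Suc i mod m) \<noteq> r i"
  shows "winding r' = winding r"
proof -
  have layer': "r i \<noteq> r' (Suc i mod m)" "r (Suc i mod m) \<noteq> r' i" if "i < m" for i
    using layer that by auto
  define P where "P i = turn (r i) (r' (Suc i mod m))" for i
  define Q where "Q i = turn (r' i) (r (Suc i mod m))" for i
  have "turn2 (r i) (r (Suc (Suc i mod m) mod m)) = P i + Q (Suc i mod m)" if "i < m" for i
    unfolding P_def Q_def
    using that by (intro turn_add[symmetric]) (simp_all add: lt layer layer' Suc_mod_lt)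
  then have r: "winding r = (\<Sum>i<m. P i) + (\<Sum>i<m. Q i)"
    unfolding winding_def by (simp add: sum.distrib sum_rotate)
  have "turn2 (r' i) (r' (Suc (Suc i mod m) mod m)) = Q i + P (Suc i mod m)" if "i < m" for i
    unfolding P_def Q_def
    using that by (intro turn_add[symmetric]) (simp_all add: lt layer layer' Suc_mod_lt)
  then have "winding r' = (\<Sum>i<m. Q i) + (\<Sum>i<m. P i)"
    unfolding winding_def by (simp add: sum.distrib sum_rotate)
  with r show ?thesis by simp
qed

text \<open>The hypotheses say that \<open>L\<close> properly 3-colours the generalised Mycielskian of \<open>C\<^sub>m\<close> with
  layers \<open>0..s\<close>, apex removed.\<close>
lemma top_layer_uses_every_colour:
  fixes L :: "nat \<Rightarrow> nat \<Rightarrow> nat"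
  assumes lt: "\<And>j i. j \<le> s \<Longrightarrow> i < m \<Longrightarrow> L j i < 3" and "a < 3"
    and base: "\<forall>i<m. L 0 i \<noteq> L 0 (Suc i mod m)"
    and layer: "\<And>j. j < s \<Longrightarrow>
      \<forall>i<m. L (Suc j) i \<noteq> L j (Suc i mod m) \<and> L (Suc j) (Suc i mod m) \<noteq> L j i"
  shows "\<exists>i<m. L s i = a"
proof (rule ccontr)
  assume avoid: "\<not> (\<exists>i<m. L s i = a)"
  have same: "winding (L j) = winding (L 0)" if "j \<le> s" for j
    using that
  proof (induction j)
    case (Suc j)
    have "winding (L (Suc j)) = winding (L j)"
      by (rule winding_next_row) (use lt layer Suc.prems in auto)
    then show ?case using Suc by simp
  qed simp
  have "winding (L s) = 0"
    by (rule winding_avoiding_colour[OF \<open>a < 3\<close>]) (use lt avoid in auto)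
  moreover have "winding (L 0) \<noteq> 0"
    by (rule winding_proper_row_neq_0[OF _ base]) (use lt in auto)
  ultimately show False using same[of s] by simp
qed

end

section \<open>The graph\<close>

text \<open>The graph has vertices \<open>(g, j, i)\<close> with copy \<open>g \<le> 1\<close>, layer \<open>j \<le> s + 1\<close> and position
  \<open>i < m\<close>. In each copy, layers \<open>0..s\<close> form the generalised Mycielskian of \<open>C\<^sub>m\<close> without its
  apex; the apex is replaced by layer \<open>s + 1\<close>, each of whose vertices is joined to its twin in
  layer \<open>s\<close> and to the whole layer \<open>s + 1\<close> of the other copy. This complete bipartite graph
  \<open>K\<^sub>m\<^sub>,\<^sub>m\<close> supplies the quadratically many edges.\<close>
locale mycielski_pair = odd_cycle +
  fixes s :: nat
begin

definition layer_adj :: "nat \<Rightarrow> nat \<Rightarrow> nat \<Rightarrow> nat \<Rightarrow> bool" where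
  "layer_adj j i j' i' \<longleftrightarrow>
     (j = 0 \<and> j' = 0 \<and> i' = Suc i mod m) \<or> (j' = Suc j \<and> j' \<le> s \<and> cyc_adj i i')"

definition pair_adj :: "nat \<Rightarrow> nat \<Rightarrow> nat \<Rightarrow> nat \<Rightarrow> nat \<Rightarrow> nat \<Rightarrow> bool" where
  "pair_adj g j i g' j' i' \<longleftrightarrow>
     (g' = g \<and> layer_adj j i j' i') \<or> (g' = g \<and> j = s \<and> j' = Suc s \<and> i' = i) \<or>
     (g = 0 \<and> g' = 1 \<and> j = Suc s \<and> j' = Suc s)"

definition pair_edge :: "nat \<Rightarrow> nat \<Rightarrow> nat \<Rightarrow> nat \<Rightarrow> nat \<Rightarrow> nat \<Rightarrow> bool" where
  "pair_edge g j i g' j' i' \<longleftrightarrow> pair_adj g j i g' j' i' \<or> pair_adj g' j' i' g j i"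

lemma layer_adj_le: "layer_adj j i j' i' \<Longrightarrow> j \<le> s \<and> j' \<le> s"
  unfolding layer_adj_def by auto

lemma pair_adj_cases:
  assumes "pair_adj g j i g' j' i'"
  obtains (layer) "g' = g" "layer_adj j i j' i'"
    | (twin) "g' = g" "j = s" "j' = Suc s" "i' = i"
    | (cross) "g = 0" "g' = 1" "j = Suc s" "j' = Suc s"
  using assms unfolding pair_adj_def by blast

lemma pair_adj_irrefl: "i < m \<Longrightarrow> \<not> pair_adj g j i g j i"
  unfolding pair_adj_def layer_adj_def using Suc_mod_neq[of i] by auto

definition copy_size :: nat where
  "copy_size = (s + 2) * m"

definition nverts :: nat where
  "nverts = 2 * copy_size"

definition vertex :: "nat \<Rightarrow> nat \<Rightarrow> nat \<Rightarrow> nat" where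
  "vertex g j i = g * copy_size + j * m + i"

definition copy_of :: "nat \<Rightarrow> nat" where
  "copy_of v = v div copy_size"

definition layer_of :: "nat \<Rightarrow> nat" where
  "layer_of v = v mod copy_size div m"

definition index_of :: "nat \<Rightarrow> nat" where
  "index_of v = v mod m"

definition edge :: "nat \<Rightarrow> nat \<Rightarrow> bool" where
  "edge u v \<longleftrightarrow> u < nverts \<and> v < nverts \<and>
     pair_edge (copy_of u) (layer_of u) (index_of u) (copy_of v) (layer_of v) (index_of v)"

definition coords :: "nat \<Rightarrow> nat \<times> nat \<times> nat" where
  "coords v = (copy_of v, layer_of v, index_of v)"

lemma copy_size_pos: "0 < copy_size"
  unfolding copy_size_def using m_pos by simp

lemma nverts_eq: "nverts = 2 * (s + 2) * m"
  unfolding nverts_def copy_size_def by simp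

lemma vertex_bounds:
  assumes "v < nverts"
  shows "copy_of v \<le> 1" "layer_of v \<le> Suc s" "index_of v < m"
proof -
  show "copy_of v \<le> 1"
    using assms less_mult_imp_div_less[of v 2 copy_size] unfolding copy_of_def nverts_def by simp
  have "v mod copy_size < (s + 2) * m"
    using copy_size_pos unfolding copy_size_def by simp
  then have "v mod copy_size div m < s + 2"
    by (simp add: div_less_iff_less_mult m_pos)
  then show "layer_of v \<le> Suc s"
    unfolding layer_of_def by simp
  show "index_of v < m"
    unfolding index_of_def using m_pos by simp
qed

lemma vertex_decomp: "v = vertex (copy_of v) (layer_of v) (index_of v)"
proof -
  have "v mod copy_size mod m = v mod m"
    unfolding copy_size_def by (simp add: mod_mod_cancel)
  then show ?thesis
    unfolding vertex_def copy_of_def layer_of_def index_of_def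
    by (metis div_mult_mod_eq add.assoc)
qed

lemma coords_inj: "coords u = coords v \<Longrightarrow> u = v"
  using vertex_decomp[of u] vertex_decomp[of v] unfolding coords_def by simp

lemma offset_in_copy: "j \<le> Suc s \<Longrightarrow> i < m \<Longrightarrow> j * m + i < copy_size"
proof -
  assume "j \<le> Suc s" "i < m"
  then have "j * m + i < Suc j * m" by simp
  also have "\<dots> \<le> (s + 2) * m" using \<open>j \<le> Suc s\<close> by (intro mult_right_mono) auto
  finally show ?thesis unfolding copy_size_def .
qed

lemma vertex_coords:
  assumes "j \<le> Suc s" "i < m"
  shows "copy_of (vertex g j i) = g" "layer_of (vertex g j i) = j" "index_of (vertex g j i) = i"
proof -
  have lt: "j * m + i < copy_size" using offset_in_copy assms .
  show "copy_of (vertex g j i) = g"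
    unfolding copy_of_def vertex_def using lt copy_size_pos by (simp add: add.assoc)
  show "layer_of (vertex g j i) = j"
    unfolding layer_of_def vertex_def using lt assms(2) by (simp add: add.assoc)
  have "vertex g j i = (g * (s + 2) + j) * m + i"
    unfolding vertex_def copy_size_def by (simp add: algebra_simps)
  then show "index_of (vertex g j i) = i"
    unfolding index_of_def using assms(2) by simp
qed

lemma vertex_lt_nverts: "g \<le> 1 \<Longrightarrow> j \<le> Suc s \<Longrightarrow> i < m \<Longrightarrow> vertex g j i < nverts"
  using offset_in_copy[of j i] mult_right_mono[of g 1 copy_size]
  unfolding vertex_def nverts_def by linarith

lemma edge_vertex:
  assumes "g \<le> 1" "g' \<le> 1" "j \<le> Suc s" "j' \<le> Suc s" "i < m" "i' < m"
  shows "edge (vertex g j i) (vertex g' j' i') \<longleftrightarrow> pair_edge g j i g' j' i'"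
  using assms vertex_lt_nverts vertex_coords unfolding edge_def by simp

lemma edge_pair_edge:
  "edge u v \<Longrightarrow>
    pair_edge (copy_of u) (layer_of u) (index_of u) (copy_of v) (layer_of v) (index_of v)"
  unfolding edge_def by simp

lemma edge_lt: "edge u v \<Longrightarrow> u < nverts"
  unfolding edge_def by simp

lemma graph_edge: "graph nverts edge"
  unfolding graph_def
proof (intro allI impI conjI)
  fix u v assume uv: "edge u v"
  show "u < nverts" "v < nverts" "edge v u"
    using uv unfolding edge_def pair_edge_def by auto
  show "u \<noteq> v"
    using uv pair_adj_irrefl vertex_bounds(3) unfolding edge_def pair_edge_def by blast
qed

lemma edge_sym: "edge u v \<Longrightarrow> edge v u"
  using graph_edge unfolding graph_def by blast

end

section \<open>Chromatic number\<close>

lemma colorable_mono: "colorable n E k \<Longrightarrow> k \<le> k' \<Longrightarrow> colorable n E k'"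
  unfolding colorable_def by (meson order_less_le_trans)

lemma chromatic_number_eqI:
  assumes "colorable n E k" "\<not> colorable n E (k - 1)" "0 < k"
  shows "chromatic_number n E = k"
  unfolding chromatic_number_def
proof (rule Least_equality)
  show "colorable n E k" by fact
  show "k \<le> k'" if "colorable n E k'" for k'
    using that assms(2,3) colorable_mono[of n E k' "k - 1"] by (cases "k' \<le> k - 1") auto
qed

lemma complete_bipartite_3_colouring:
  fixes f h :: "nat \<Rightarrow> nat"
  assumes "\<forall>i<m. f i < 3" "\<forall>k<m. h k < 3" "\<forall>i<m. \<forall>k<m. f i \<noteq> h k" "0 < m"
  shows "(\<forall>i<m. f i = f 0) \<or> (\<forall>k<m. h k = h 0)"
proof (rule ccontr)
  assume "\<not> ?thesis"
  then obtain i k where "i < m" "k < m" "f i \<noteq> f 0" "h k \<noteq> h 0"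
    by blast
  moreover have "f i < 3" "f 0 < 3" "h k < 3" "h 0 < 3" "f i \<noteq> h k" "f i \<noteq> h 0" "f 0 \<noteq> h k" "f 0 \<noteq> h 0"
    using assms \<open>i < m\<close> \<open>k < m\<close> by auto
  ultimately show False by presburger
qed

context mycielski_pair
begin

lemma layer_adj_cyc_proper:
  assumes "\<forall>i<m. b i \<noteq> b (Suc i mod m)" "layer_adj j i j' i'" "i < m" "i' < m"
  shows "b i \<noteq> b i'"
  using assms unfolding layer_adj_def cyc_adj_def by metis

definition four_col :: "nat \<Rightarrow> nat \<Rightarrow> nat \<Rightarrow> nat" where
  "four_col g j i = (if j \<le> s then cyc_col 0 1 2 0 i
     else if g = 0 then 3 else if cyc_col 0 1 2 0 i = 1 then 2 else 1)"

lemma four_col_proper: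
  assumes "i < m" "i' < m" "pair_adj g j i g' j' i'"
  shows "four_col g j i \<noteq> four_col g' j' i'"
  using assms(3)
proof (cases rule: pair_adj_cases)
  case layer
  then show ?thesis
    using layer_adj_le layer_adj_cyc_proper[OF cyc_col_012_proper _ assms(1,2)]
    unfolding four_col_def by auto
qed (use cyc_col_lt[of 0 1 2 0 i] in \<open>auto simp: four_col_def\<close>)

lemma colorable_4: "colorable nverts edge 4"
  unfolding colorable_def
proof (intro exI conjI allI impI)
  let ?f = "\<lambda>v. four_col (copy_of v) (layer_of v) (index_of v)"
  show "?f v < 4" for v
    unfolding four_col_def using cyc_col_lt[of 0 1 2 0 "index_of v"] by auto
  show "?f u \<noteq> ?f v" if "edge u v" for u v
    using that four_col_proper vertex_bounds(3) unfolding edge_def pair_edge_def by metis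
qed

lemma no_3_colouring_with_constant_apex_layer:
  fixes col :: "nat \<Rightarrow> nat \<Rightarrow> nat \<Rightarrow> nat"
  assumes col_lt: "\<And>g j i. g \<le> 1 \<Longrightarrow> j \<le> Suc s \<Longrightarrow> i < m \<Longrightarrow> col g j i < 3"
    and col_proper: "\<And>g g' j j' i i'. g \<le> 1 \<Longrightarrow> g' \<le> 1 \<Longrightarrow> j \<le> Suc s \<Longrightarrow> j' \<le> Suc s \<Longrightarrow>
      i < m \<Longrightarrow> i' < m \<Longrightarrow> pair_adj g j i g' j' i' \<Longrightarrow> col g j i \<noteq> col g' j' i'"
    and "g \<le> 1" and apex_const: "\<forall>i<m. col g (Suc s) i = col g (Suc s) 0"
  shows False
proof -
  have "\<exists>i<m. col g s i = col g (Suc s) 0"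
  proof (rule top_layer_uses_every_colour)
    show "col g j i < 3" if "j \<le> s" "i < m" for j i
      using col_lt \<open>g \<le> 1\<close> that by simp
    show "col g (Suc s) 0 < 3"
      using col_lt \<open>g \<le> 1\<close> m_pos by simp
    show "\<forall>i<m. col g 0 i \<noteq> col g 0 (Suc i mod m)"
      using \<open>g \<le> 1\<close> Suc_mod_lt by (intro allI impI col_proper) (simp_all add: pair_adj_def layer_adj_def)
    show "\<forall>i<m. col g (Suc j) i \<noteq> col g j (Suc i mod m) \<and> col g (Suc j) (Suc i mod m) \<noteq> col g j i"
      if "j < s" for j
    proof (intro allI impI conjI)
      fix i assume "i < m"
      have "col g j (Suc i mod m) \<noteq> col g (Suc j) i" "col g j i \<noteq> col g (Suc j) (Suc i mod m)"
        using \<open>i < m\<close> \<open>g \<le> 1\<close> that Suc_mod_lt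
        by (intro col_proper; simp add: pair_adj_def layer_adj_def cyc_adj_def)+
      then show "col g (Suc j) i \<noteq> col g j (Suc i mod m)" "col g (Suc j) (Suc i mod m) \<noteq> col g j i"
        by auto
    qed
  qed
  then obtain i where i: "i < m" "col g s i = col g (Suc s) 0"
    by blast
  have "col g s i \<noteq> col g (Suc s) i"
    using i \<open>g \<le> 1\<close> by (intro col_proper) (simp_all add: pair_adj_def)
  then show False
    using i apex_const[rule_format, OF i(1)] by simp
qed

lemma not_colorable_3: "\<not> colorable nverts edge 3"
proof
  assume "colorable nverts edge 3"
  then obtain f :: "nat \<Rightarrow> nat" where f_lt: "\<forall>v<nverts. f v < 3"
    and f_proper: "\<forall>u v. edge u v \<longrightarrow> f u \<noteq> f v"
    unfolding colorable_def by blast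
  define col where "col g j i = f (vertex g j i)" for g j i
  have col_lt: "col g j i < 3" if "g \<le> 1" "j \<le> Suc s" "i < m" for g j i
    using f_lt vertex_lt_nverts that unfolding col_def by blast
  have col_proper: "col g j i \<noteq> col g' j' i'"
    if "g \<le> 1" "g' \<le> 1" "j \<le> Suc s" "j' \<le> Suc s" "i < m" "i' < m" "pair_adj g j i g' j' i'"
    for g j i g' j' i'
  proof -
    have "edge (vertex g j i) (vertex g' j' i')"
      using edge_vertex[OF that(1-6)] that(7) unfolding pair_edge_def by simp
    then show ?thesis using f_proper unfolding col_def by blast
  qed
  have "(\<forall>i<m. col 0 (Suc s) i = col 0 (Suc s) 0) \<or> (\<forall>k<m. col 1 (Suc s) k = col 1 (Suc s) 0)"
  proof (rule complete_bipartite_3_colouring)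
    show "\<forall>i<m. col 0 (Suc s) i < 3" "\<forall>k<m. col 1 (Suc s) k < 3"
      by (simp_all add: col_lt)
    show "\<forall>i<m. \<forall>k<m. col 0 (Suc s) i \<noteq> col 1 (Suc s) k"
      by (intro allI impI col_proper) (simp_all add: pair_adj_def)
  qed (rule m_pos)
  then show False
  proof
    assume "\<forall>i<m. col 0 (Suc s) i = col 0 (Suc s) 0"
    from no_3_colouring_with_constant_apex_layer[where col = col, OF col_lt col_proper _ this] show False by simp
  next
    assume "\<forall>i<m. col 1 (Suc s) i = col 1 (Suc s) 0"
    from no_3_colouring_with_constant_apex_layer[where col = col, OF col_lt col_proper _ this] show False by simp
  qed
qed

lemma chromatic_number_4: "chromatic_number nverts edge = 4"
  using chromatic_number_eqI[OF colorable_4] not_colorable_3 by simp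

end

section \<open>Criticality\<close>

context mycielski_pair
begin

definition layer_parity :: "nat \<Rightarrow> nat" where
  "layer_parity j = (if even (s + j) then 1 else 0)"

text \<open>Colouring of one copy, apex layer excluded, after deleting the edge \<open>{(0, p), (0, p + 1)}\<close> of
  the base cycle: the base cycle becomes a path and the other layers are monochromatic, with colour
  \<open>1\<close> on layer \<open>s\<close>.\<close>
definition base_edge_col :: "nat \<Rightarrow> nat \<Rightarrow> nat \<Rightarrow> nat" where
  "base_edge_col p j i = (if j = 0 then arc_col 2 (1 - layer_parity 1) p i else layer_parity j)"

lemma base_edge_col_lt: "base_edge_col p j i < 3"
  unfolding base_edge_col_def arc_col_def layer_parity_def by auto

lemma base_edge_col_top: "base_edge_col p s i \<noteq> 0"
  unfolding base_edge_col_def arc_col_def layer_parity_def by auto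

lemma base_edge_col_proper:
  assumes "p < m" "i < m" "i' < m" "layer_adj j i j' i'" "\<not> (j = 0 \<and> j' = 0 \<and> i = p)"
  shows "base_edge_col p j i \<noteq> base_edge_col p j' i'"
proof (cases "j = 0 \<and> j' = 0")
  case True
  then have "i' = Suc i mod m" "i \<noteq> p" using assms unfolding layer_adj_def by auto
  then show ?thesis
    using arc_col_proper[of 2 "1 - layer_parity 1" p i] assms True
    unfolding base_edge_col_def layer_parity_def by auto
next
  case False
  then have "j' = Suc j" using assms unfolding layer_adj_def by auto
  then show ?thesis unfolding base_edge_col_def arc_col_def layer_parity_def by simp
qed

text \<open>Colouring of one copy, apex layer excluded, after deleting a rung, i.e. an edge between
  layers \<open>jl\<close> and \<open>jl + 1\<close>: the layers up to \<open>jl\<close> repeat a proper colouring \<open>low\<close> of \<open>C\<^sub>m\<close>, layer \<open>jl + 1\<close> is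
  coloured by \<open>mid\<close>, and the layers above alternate between \<open>1\<close> and \<open>2\<close>.\<close>
definition rung_col :: "(nat \<Rightarrow> nat) \<Rightarrow> (nat \<Rightarrow> nat) \<Rightarrow> nat \<Rightarrow> nat \<Rightarrow> nat \<Rightarrow> nat" where
  "rung_col low mid jl j i = (if j \<le> jl then low i else if j = Suc jl then mid i
     else if even (j - Suc jl) then 2 else 1)"

lemma rung_col_lt: "(\<And>i. low i < 3) \<Longrightarrow> (\<And>i. mid i < 3) \<Longrightarrow> rung_col low mid jl j i < 3"
  unfolding rung_col_def by auto

lemma rung_col_top:
  assumes "Suc jl \<le> s" "Suc jl = s \<Longrightarrow> mid i \<noteq> 0"
  shows "rung_col low mid jl s i \<noteq> 0"
  using assms unfolding rung_col_def by auto

lemma rung_col_proper: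
  assumes low_proper: "\<forall>i<m. low i \<noteq> low (Suc i mod m)"
    and mid_ne_1: "Suc (Suc jl) \<le> s \<Longrightarrow> mid i \<noteq> 1"
    and "i < m" "i' < m" and adj: "layer_adj j i j' i'"
    and rung_ne: "j = jl \<Longrightarrow> j' = Suc jl \<Longrightarrow> low i \<noteq> mid i'"
  shows "rung_col low mid jl j i \<noteq> rung_col low mid jl j' i'"
proof -
  have j': "j' = Suc j \<or> j = 0 \<and> j' = 0" "j' \<le> s" using adj unfolding layer_adj_def by auto
  consider (below) "j' \<le> jl" | (rung) "j = jl" "j' = Suc jl" | (mid) "j = Suc jl" | (above) "Suc jl < j"
    using j' by linarith
  then show ?thesis
  proof cases
    case below
    then show ?thesis
      using j' layer_adj_cyc_proper[OF low_proper adj \<open>i < m\<close> \<open>i' < m\<close>] unfolding rung_col_def by auto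
  next
    case rung
    then show ?thesis using rung_ne unfolding rung_col_def by auto
  next
    case mid
    then show ?thesis using j' mid_ne_1 unfolding rung_col_def by auto
  next
    case above
    then have "Suc j - Suc jl = Suc (j - Suc jl)" by simp
    then show ?thesis using above j' unfolding rung_col_def by auto
  qed
qed

text \<open>Colour of the lower end of the deleted edge; it must differ from \<open>1\<close> when layer \<open>jl + 2\<close>
  exists and from \<open>0\<close> when layer \<open>jl + 1\<close> is the last one.\<close>
definition rung_end_col :: "nat \<Rightarrow> nat" where
  "rung_end_col jl = (if Suc jl = s then 1 else 0)"

lemma rung_end_col_cases: "rung_end_col jl = 0 \<or> rung_end_col jl = 1"
  unfolding rung_end_col_def by auto

text \<open>For the rung from \<open>(jl, d)\<close> to \<open>(jl + 1, d - 1)\<close>, resp. \<open>(jl + 1, d + 1)\<close>: layer \<open>jl + 1\<close>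
  has colour \<open>x = rung_end_col jl\<close> except at the other upper neighbour of \<open>d\<close>, which gets \<open>2\<close>;
  \<open>low\<close> gives \<open>x\<close> and \<open>1 - x\<close> to the lower neighbours of that vertex.\<close>
definition rung_bwd_col :: "nat \<Rightarrow> nat \<Rightarrow> nat \<Rightarrow> nat \<Rightarrow> nat" where
  "rung_bwd_col jl d = rung_col (cyc_col (rung_end_col jl) 2 (1 - rung_end_col jl) d)
     (\<lambda>i. if i = Suc d mod m then 2 else rung_end_col jl) jl"

definition rung_fwd_col :: "nat \<Rightarrow> nat \<Rightarrow> nat \<Rightarrow> nat \<Rightarrow> nat" where
  "rung_fwd_col jl d = rung_col (cyc_col (rung_end_col jl) (1 - rung_end_col jl) 2 d)
     (\<lambda>i. if Suc i mod m = d then 2 else rung_end_col jl) jl"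

lemma rung_bwd_col_proper:
  assumes "Suc jl \<le> s" "d < m" "i < m" "i' < m" "layer_adj j i j' i'"
    "\<not> (j = jl \<and> i = d \<and> j' = Suc jl \<and> Suc i' mod m = d)"
  shows "rung_bwd_col jl d j i \<noteq> rung_bwd_col jl d j' i'"
  unfolding rung_bwd_col_def
proof (rule rung_col_proper[OF _ _ assms(3-5)])
  let ?x = "rung_end_col jl"
  have dist: "?x \<noteq> 2" "2 \<noteq> 1 - ?x" "?x \<noteq> 1 - ?x" using rung_end_col_cases[of jl] by auto
  show "\<forall>i<m. cyc_col ?x 2 (1 - ?x) d i \<noteq> cyc_col ?x 2 (1 - ?x) d (Suc i mod m)"
    using cyc_col_proper[OF dist assms(2)] by blast
  show "(if i = Suc d mod m then 2 else ?x) \<noteq> 1" if "Suc (Suc jl) \<le> s"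
    using that unfolding rung_end_col_def by auto
  assume "j = jl" "j' = Suc jl"
  have adj: "cyc_adj i i'" using assms(5) \<open>j' = Suc jl\<close> unfolding layer_adj_def by auto
  show "cyc_col ?x 2 (1 - ?x) d i \<noteq> (if i' = Suc d mod m then 2 else ?x)"
  proof (cases "i' = Suc d mod m")
    case True
    then have "i = d \<or> i = Suc (Suc d mod m) mod m"
      using adj Suc_mod_inj[OF assms(2,3)] unfolding cyc_adj_def by auto
    then show ?thesis using True cyc_col_at cyc_col_Suc_Suc[OF assms(2)] dist by auto
  next
    case False
    then have "i \<noteq> d" using adj assms(6) \<open>j = jl\<close> \<open>j' = Suc jl\<close> unfolding cyc_adj_def by auto
    then show ?thesis using False cyc_col_other[of i d ?x 2 "1 - ?x"] dist by auto
  qed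
qed

lemma rung_fwd_col_proper:
  assumes "Suc jl \<le> s" "d < m" "i < m" "i' < m" "layer_adj j i j' i'"
    "\<not> (j = jl \<and> i = d \<and> j' = Suc jl \<and> i' = Suc d mod m)"
  shows "rung_fwd_col jl d j i \<noteq> rung_fwd_col jl d j' i'"
  unfolding rung_fwd_col_def
proof (rule rung_col_proper[OF _ _ assms(3-5)])
  let ?x = "rung_end_col jl"
  have dist: "?x \<noteq> 1 - ?x" "1 - ?x \<noteq> 2" "?x \<noteq> 2" using rung_end_col_cases[of jl] by auto
  show "\<forall>i<m. cyc_col ?x (1 - ?x) 2 d i \<noteq> cyc_col ?x (1 - ?x) 2 d (Suc i mod m)"
    using cyc_col_proper[OF dist assms(2)] by blast
  show "(if Suc i mod m = d then 2 else ?x) \<noteq> 1" if "Suc (Suc jl) \<le> s"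
    using that unfolding rung_end_col_def by auto
  assume "j = jl" "j' = Suc jl"
  have adj: "cyc_adj i i'" using assms(5) \<open>j' = Suc jl\<close> unfolding layer_adj_def by auto
  show "cyc_col ?x (1 - ?x) 2 d i \<noteq> (if Suc i' mod m = d then 2 else ?x)"
  proof (cases "Suc i' mod m = d")
    case True
    then have "i = d \<or> Suc (Suc i mod m) mod m = d"
      using adj unfolding cyc_adj_def by auto
    then show ?thesis using True cyc_col_at cyc_col_before_pred[OF assms(2,3)] dist by auto
  next
    case False
    then have "i \<noteq> d" using adj assms(6) \<open>j = jl\<close> \<open>j' = Suc jl\<close> unfolding cyc_adj_def by auto
    then show ?thesis using False cyc_col_other[of i d ?x "1 - ?x" 2] dist by auto
  qed
qed

definition proper_except ::
    "nat \<times> nat \<times> nat \<Rightarrow> nat \<times> nat \<times> nat \<Rightarrow> (nat \<Rightarrow> nat \<Rightarrow> nat \<Rightarrow> nat) \<Rightarrow> bool" where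
  "proper_except A B col \<longleftrightarrow>
     (\<forall>g j i. g \<le> 1 \<longrightarrow> j \<le> Suc s \<longrightarrow> i < m \<longrightarrow> col g j i < 3) \<and>
     (\<forall>g j i g' j' i'. g \<le> 1 \<longrightarrow> g' \<le> 1 \<longrightarrow> i < m \<longrightarrow> i' < m \<longrightarrow> pair_adj g j i g' j' i' \<longrightarrow>
        {(g, j, i), (g', j', i')} \<noteq> {A, B} \<longrightarrow> col g j i \<noteq> col g' j' i')"

lemma proper_exceptD:
  assumes "proper_except A B col" "g \<le> 1" "g' \<le> 1" "i < m" "i' < m" "pair_adj g j i g' j' i'"
    "{(g, j, i), (g', j', i')} \<noteq> {A, B}"
  shows "col g j i \<noteq> col g' j' i'"
  using assms unfolding proper_except_def by blast

lemma colorable_remove_edge: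
  assumes col: "proper_except (coords a) (coords b) col"
  shows "colorable nverts (remove_edge edge a b) 3"
  unfolding colorable_def
proof (intro exI conjI allI impI)
  let ?f = "\<lambda>v. col (copy_of v) (layer_of v) (index_of v)"
  show "?f v < 3" if "v < nverts" for v
    using col vertex_bounds[OF that] unfolding proper_except_def by blast
  fix u v assume "remove_edge edge a b u v"
  then have uv: "edge u v" and ne: "{coords u, coords v} \<noteq> {coords a, coords b}"
    unfolding remove_edge_def using coords_inj by (auto simp: doubleton_eq_iff)
  then have "u < nverts" "v < nverts" unfolding edge_def by auto
  note bounds = vertex_bounds[OF this(1)] vertex_bounds[OF this(2)]
  have ne': "{coords v, coords u} \<noteq> {coords a, coords b}"
    using ne by (simp add: insert_commute)
  from uv consider
      "pair_adj (copy_of u) (layer_of u) (index_of u) (copy_of v) (layer_of v) (index_of v)"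
    | "pair_adj (copy_of v) (layer_of v) (index_of v) (copy_of u) (layer_of u) (index_of u)"
    unfolding edge_def pair_edge_def by blast
  then show "?f u \<noteq> ?f v"
  proof cases
    case 1
    then show ?thesis
      using proper_exceptD[OF col] bounds ne unfolding coords_def by blast
  next
    case 2
    then show ?thesis
      using proper_exceptD[OF col] bounds ne' unfolding coords_def by metis
  qed
qed

text \<open>Copy \<open>g0\<close> has colour \<open>0\<close> on its apex layer and the other copy avoids \<open>0\<close> there, so the
  complete bipartite part is properly coloured.\<close>
definition side_col :: "nat \<Rightarrow> (nat \<Rightarrow> nat \<Rightarrow> nat) \<Rightarrow> nat \<Rightarrow> nat \<Rightarrow> nat \<Rightarrow> nat" where
  "side_col g0 L g j i = (if g = g0 then (if j \<le> s then L j i else 0)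
     else if j \<le> s then cyc_col 0 1 2 0 i else if cyc_col 0 1 2 0 i = 1 then 2 else 1)"

lemma side_col_proper_except:
  fixes L :: "nat \<Rightarrow> nat \<Rightarrow> nat"
  assumes "g0 \<le> 1" and L_lt: "\<And>j i. L j i < 3"
    and L_proper: "\<And>j i j' i'. i < m \<Longrightarrow> i' < m \<Longrightarrow> layer_adj j i j' i' \<Longrightarrow>
       {(g0, j, i), (g0, j', i')} \<noteq> {A, B} \<Longrightarrow> L j i \<noteq> L j' i'"
    and L_top: "\<And>i. i < m \<Longrightarrow> {(g0, s, i), (g0, Suc s, i)} \<noteq> {A, B} \<Longrightarrow> L s i \<noteq> 0"
  shows "proper_except A B (side_col g0 L)"
  unfolding proper_except_def
proof (intro conjI allI impI)
  show "side_col g0 L g j i < 3" for g j i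
    using L_lt[of j i] cyc_col_lt[of 0 1 2 0 i] unfolding side_col_def by auto
  fix g j i g' j' i'
  assume "g \<le> 1" "g' \<le> 1" "i < m" "i' < m" and adj: "pair_adj g j i g' j' i'"
    and ne: "{(g, j, i), (g', j', i')} \<noteq> {A, B}"
  from adj show "side_col g0 L g j i \<noteq> side_col g0 L g' j' i'"
  proof (cases rule: pair_adj_cases)
    case layer
    have "j \<le> s" "j' \<le> s" using layer_adj_le[OF layer(2)] by auto
    moreover have "L j i \<noteq> L j' i'" if "g = g0"
      using ne unfolding layer(1) that by (rule L_proper[OF \<open>i < m\<close> \<open>i' < m\<close> layer(2)])
    ultimately show ?thesis
      using layer_adj_cyc_proper[OF cyc_col_012_proper layer(2) \<open>i < m\<close> \<open>i' < m\<close>] layer(1)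
      unfolding side_col_def by auto
  next
    case twin
    have "L s i \<noteq> 0" if "g = g0"
      using ne unfolding twin that by (rule L_top[OF \<open>i < m\<close>])
    then show ?thesis using twin unfolding side_col_def by auto
  next
    case cross
    then show ?thesis
      using \<open>g0 \<le> 1\<close> cyc_col_lt[of 0 1 2 0 i] cyc_col_lt[of 0 1 2 0 i'] unfolding side_col_def by auto
  qed
qed

text \<open>After deleting the edge \<open>{(0, s + 1, p), (1, s + 1, q)}\<close>, each copy uses the colour \<open>2\<close> on its
  apex layer only at \<open>p\<close>, respectively \<open>q\<close>.\<close>
definition cross_edge_col :: "nat \<Rightarrow> nat \<Rightarrow> nat \<Rightarrow> nat \<Rightarrow> nat \<Rightarrow> nat" where
  "cross_edge_col p q g j i = (if g = 0
      then (if j \<le> s then cyc_col 0 1 2 p i else if i = p then 2 else 0)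
      else (if j \<le> s then cyc_col 1 0 2 q i else if i = q then 2 else 1))"

lemma proper_except_cross:
  assumes "p < m" "q < m"
  shows "proper_except (0, Suc s, p) (1, Suc s, q) (cross_edge_col p q)"
  unfolding proper_except_def
proof (intro conjI allI impI)
  show "cross_edge_col p q g j i < 3" for g j i
    unfolding cross_edge_col_def using cyc_col_lt[of 0 1 2 p i] cyc_col_lt[of 1 0 2 q i] by auto
  fix g j i g' j' i'
  assume "g \<le> 1" "g' \<le> 1" "i < m" "i' < m" and adj: "pair_adj g j i g' j' i'"
    and ne: "{(g, j, i), (g', j', i')} \<noteq> {(0, Suc s, p), (1, Suc s, q)}"
  from adj show "cross_edge_col p q g j i \<noteq> cross_edge_col p q g' j' i'"
  proof (cases rule: pair_adj_cases)
    case layer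
    have "\<forall>i<m. cyc_col 0 1 2 p i \<noteq> cyc_col 0 1 2 p (Suc i mod m)"
      "\<forall>i<m. cyc_col 1 0 2 q i \<noteq> cyc_col 1 0 2 q (Suc i mod m)"
      using cyc_col_proper[of 0 1 2 p] cyc_col_proper[of 1 0 2 q] assms by simp_all
    then have "cyc_col 0 1 2 p i \<noteq> cyc_col 0 1 2 p i'" "cyc_col 1 0 2 q i \<noteq> cyc_col 1 0 2 q i'"
      using layer_adj_cyc_proper[OF _ layer(2) \<open>i < m\<close> \<open>i' < m\<close>] by blast+
    then show ?thesis using layer layer_adj_le unfolding cross_edge_col_def by simp
  next
    case twin
    then show ?thesis
      using cyc_col_at[of 0 1 2 p] cyc_col_other[of i p 0 1 2]
        cyc_col_at[of 1 0 2 q] cyc_col_other[of i q 1 0 2]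
      unfolding cross_edge_col_def by auto
  next
    case cross
    then have "\<not> (i = p \<and> i' = q)" using ne by auto
    then show ?thesis using cross unfolding cross_edge_col_def by auto
  qed
qed

lemma proper_except_twin:
  assumes "g \<le> 1" "i < m"
  shows "proper_except (g, s, i) (g, Suc s, i) (side_col g (\<lambda>_. cyc_col 0 1 2 i))"
proof (rule side_col_proper_except[OF assms(1)])
  show "cyc_col 0 1 2 i i' < 3" for i'
    by (rule cyc_col_lt) simp_all
  show "cyc_col 0 1 2 i ia \<noteq> cyc_col 0 1 2 i ib" if "ia < m" "ib < m" "layer_adj ja ia jb ib" for ja ia jb ib
  proof -
    have "\<forall>k<m. cyc_col 0 1 2 i k \<noteq> cyc_col 0 1 2 i (Suc k mod m)"
      using cyc_col_proper[of 0 1 2 i] assms(2) by simp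
    then show ?thesis using layer_adj_cyc_proper[OF _ that(3,1,2)] by blast
  qed
  show "cyc_col 0 1 2 i ia \<noteq> 0" if "ia < m" "{(g, s, ia), (g, Suc s, ia)} \<noteq> {(g, s, i), (g, Suc s, i)}" for ia
  proof -
    have "ia \<noteq> i" using that(2) by auto
    then show ?thesis using cyc_col_other[of ia i 0 1 2] by auto
  qed
qed

lemma proper_except_base:
  assumes "g \<le> 1" "i < m"
  shows "proper_except (g, 0, i) (g, 0, Suc i mod m) (side_col g (base_edge_col i))"
proof (rule side_col_proper_except[OF assms(1) base_edge_col_lt])
  show "base_edge_col i s ia \<noteq> 0" for ia
    by (rule base_edge_col_top)
  fix ja ia jb ib assume "ia < m" "ib < m" and adj: "layer_adj ja ia jb ib"
    and ne: "{(g, ja, ia), (g, jb, ib)} \<noteq> {(g, 0, i), (g, 0, Suc i mod m)}"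
  have "\<not> (ja = 0 \<and> jb = 0 \<and> ia = i)"
  proof
    assume "ja = 0 \<and> jb = 0 \<and> ia = i"
    moreover from this have "ib = Suc i mod m" using adj unfolding layer_adj_def by simp
    ultimately show False using ne by simp
  qed
  then show "base_edge_col i ja ia \<noteq> base_edge_col i jb ib"
    using base_edge_col_proper[OF assms(2) \<open>ia < m\<close> \<open>ib < m\<close> adj] by blast
qed

lemma proper_except_rung_fwd:
  assumes "g \<le> 1" "i < m" "Suc j \<le> s"
  shows "proper_except (g, j, i) (g, Suc j, Suc i mod m) (side_col g (rung_fwd_col j i))"
proof (rule side_col_proper_except[OF assms(1)])
  show "rung_fwd_col j i ja ia < 3" for ja ia
    unfolding rung_fwd_col_def using rung_end_col_cases[of j]
    by (intro rung_col_lt) (auto intro!: cyc_col_lt)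
  show "rung_fwd_col j i s ia \<noteq> 0" for ia
    unfolding rung_fwd_col_def rung_end_col_def by (rule rung_col_top[OF assms(3)]) simp
  fix ja ia jb ib assume "ia < m" "ib < m" and adj: "layer_adj ja ia jb ib"
    and ne: "{(g, ja, ia), (g, jb, ib)} \<noteq> {(g, j, i), (g, Suc j, Suc i mod m)}"
  then show "rung_fwd_col j i ja ia \<noteq> rung_fwd_col j i jb ib"
    using rung_fwd_col_proper[OF assms(3,2) \<open>ia < m\<close> \<open>ib < m\<close> adj] by auto
qed

lemma proper_except_rung_bwd:
  assumes "g \<le> 1" "i < m" "i' < m" "Suc j \<le> s" "Suc i' mod m = i"
  shows "proper_except (g, j, i) (g, Suc j, i') (side_col g (rung_bwd_col j i))"
proof (rule side_col_proper_except[OF assms(1)])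
  show "rung_bwd_col j i ja ia < 3" for ja ia
    unfolding rung_bwd_col_def using rung_end_col_cases[of j]
    by (intro rung_col_lt) (auto intro!: cyc_col_lt)
  show "rung_bwd_col j i s ia \<noteq> 0" for ia
    unfolding rung_bwd_col_def rung_end_col_def by (rule rung_col_top[OF assms(4)]) simp
  fix ja ia jb ib assume "ia < m" "ib < m" and adj: "layer_adj ja ia jb ib"
    and ne: "{(g, ja, ia), (g, jb, ib)} \<noteq> {(g, j, i), (g, Suc j, i')}"
  have "\<not> (ja = j \<and> ia = i \<and> jb = Suc j \<and> Suc ib mod m = i)"
    using ne Suc_mod_inj[OF \<open>ib < m\<close> assms(3)] assms(5) by auto
  then show "rung_bwd_col j i ja ia \<noteq> rung_bwd_col j i jb ib"
    using rung_bwd_col_proper[OF assms(4,2) \<open>ia < m\<close> \<open>ib < m\<close> adj] by blast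
qed

lemma proper_except_sym: "proper_except A B col \<longleftrightarrow> proper_except B A col"
  unfolding proper_except_def by (simp add: insert_commute)

lemma proper_except_exists:
  assumes "g \<le> 1" "g' \<le> 1" "i < m" "i' < m" and adj: "pair_adj g j i g' j' i'"
  shows "\<exists>col. proper_except (g, j, i) (g', j', i') col"
  using adj
proof (cases rule: pair_adj_cases)
  case layer
  consider "j = 0" "j' = 0" "i' = Suc i mod m" | "j' = Suc j" "Suc j \<le> s" "i' = Suc i mod m"
    | "j' = Suc j" "Suc j \<le> s" "Suc i' mod m = i"
    using layer(2) unfolding layer_adj_def cyc_adj_def by auto
  then show ?thesis
  proof cases
    case 1
    then show ?thesis using proper_except_base[OF assms(1,3)] layer(1) by auto
  next
    case 2
    then show ?thesis using proper_except_rung_fwd[OF assms(1,3) 2(2)] layer(1) by auto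
  next
    case 3
    then show ?thesis using proper_except_rung_bwd[OF assms(1,3,4) 3(2,3)] layer(1) by auto
  qed
next
  case twin
  then show ?thesis using proper_except_twin assms by blast
next
  case cross
  then show ?thesis using proper_except_cross assms by blast
qed

lemma proper_except_exists_edge:
  assumes "edge a b"
  shows "\<exists>col. proper_except (coords a) (coords b) col"
proof -
  have "a < nverts" "b < nverts" using assms edge_lt edge_sym by blast+
  note bounds = vertex_bounds[OF this(1)] vertex_bounds[OF this(2)]
  from edge_pair_edge[OF assms] show ?thesis
    unfolding pair_edge_def coords_def
    using proper_except_exists[OF bounds(1,4,3,6)] proper_except_exists[OF bounds(4,1,6,3)]
      proper_except_sym by blast
qed

lemma critical_4: "critical 4 nverts edge"
  unfolding critical_def
proof (intro conjI allI impI graph_edge chromatic_number_4)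
  fix a b assume "edge a b"
  then obtain col where "proper_except (coords a) (coords b) col"
    using proper_except_exists_edge by blast
  then show "colorable nverts (remove_edge edge a b) (4 - 1)"
    using colorable_remove_edge by simp
qed

end

section \<open>Odd girth\<close>

definition cycle_walk :: "nat list \<Rightarrow> nat \<Rightarrow> nat" where
  "cycle_walk cs k = cs ! (k mod length cs)"

lemma cycle_walk_mod: "cycle_walk cs (k mod length cs) = cycle_walk cs k"
  unfolding cycle_walk_def by simp

lemma is_cycle_walk_edge:
  assumes "is_cycle n E cs"
  shows "E (cycle_walk cs k) (cycle_walk cs (Suc k))"
proof -
  have "3 \<le> length cs" using assms unfolding is_cycle_def by simp
  then have "0 < length cs" by linarith
  then have "E (cs ! (k mod length cs)) (cs ! ((k mod length cs + 1) mod length cs))"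
    using assms unfolding is_cycle_def by simp
  then show ?thesis unfolding cycle_walk_def by (simp add: mod_Suc_eq)
qed

lemma is_cycle_walk_eq:
  assumes "is_cycle n E cs" "cycle_walk cs a = cycle_walk cs b"
  shows "a mod length cs = b mod length cs"
proof -
  have "3 \<le> length cs" "distinct cs" using assms(1) unfolding is_cycle_def by auto
  moreover have "0 < length cs" using \<open>3 \<le> length cs\<close> by linarith
  then have "a mod length cs < length cs" "b mod length cs < length cs"
    by simp_all
  ultimately show ?thesis
    using assms(2) nth_eq_iff_index_eq[of cs "a mod length cs" "b mod length cs"]
    unfolding cycle_walk_def by simp
qed

lemma alternating_even_period:
  assumes "\<And>k. p (Suc k) \<longleftrightarrow> \<not> p k" "p L = p 0"
  shows "even L"
proof -
  have "p k \<longleftrightarrow> (p 0 \<longleftrightarrow> even k)" for k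
    using assms(1) by (induction k) auto
  then show ?thesis using assms(2) by blast
qed

context odd_cycle
begin

lemma Suc_mod_dvd: assumes "i < m" shows "int m dvd (int (Suc i mod m) - int i - 1)"
proof (cases "Suc i < m")
  case False
  then have "Suc i = m" using assms by simp
  then have "int (Suc i mod m) - int i - 1 = - int m" by auto
  then show ?thesis by simp
qed simp

lemma cyc_adj_dvd:
  assumes "i < m" "i' < m" "cyc_adj i i'"
  shows "int m dvd (int i' - int i - (if i' = Suc i mod m then 1 else -1))"
proof (cases "i' = Suc i mod m")
  case True
  then show ?thesis using Suc_mod_dvd[OF assms(1)] by simp
next
  case False
  then have "i = Suc i' mod m" using assms(3) unfolding cyc_adj_def by simp
  then have "int m dvd (int i - int i' - 1)" using Suc_mod_dvd[OF assms(2)] by simp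
  then have "int m dvd - (int i - int i' - 1)" by (simp only: dvd_minus_iff)
  then show ?thesis using False by (simp add: algebra_simps)
qed

text \<open>Each step of a closed walk in \<open>C\<^sub>m\<close> moves by \<open>\<plusminus>1\<close>; the steps of a walk shorter than \<open>m\<close> must
  cancel, which forces an even length.\<close>
lemma odd_closed_walk_length:
  assumes adj: "\<And>k. k < L \<Longrightarrow> cyc_adj (f k) (f (Suc k))" and lt: "\<And>k. f k < m"
    and closed: "f L = f 0" and "odd L"
  shows "m \<le> L"
proof (rule ccontr)
  assume "\<not> m \<le> L"
  define step where "step k = (if f (Suc k) = Suc (f k) mod m then 1 else (-1::int))" for k
  have step_pm: "\<forall>k<L. step k = 1 \<or> step k = -1" unfolding step_def by auto
  have "int m dvd int (f (Suc k)) - int (f k) - step k" if "k < L" for k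
    unfolding step_def using cyc_adj_dvd[OF lt lt adj[OF that]] .
  then have "int m dvd (\<Sum>k<L. int (f (Suc k)) - int (f k) - step k)"
    by (intro dvd_sum) simp
  moreover have "(\<Sum>k<L. int (f (Suc k)) - int (f k)) = 0"
    using sum_lessThan_telescope[of "\<lambda>k. int (f k)" L] closed by simp
  ultimately have "int m dvd (\<Sum>k<L. step k)"
    by (simp add: sum_subtractf)
  moreover have "\<bar>\<Sum>k<L. step k\<bar> < int m"
    using sum_plus_minus_one_abs_le[OF step_pm] \<open>\<not> m \<le> L\<close> by simp
  ultimately have "(\<Sum>k<L. step k) = 0"
    using dvd_imp_le_int[of "\<Sum>k<L. step k" "int m"] by linarith
  then show False
    using sum_plus_minus_one_even_iff[OF step_pm] \<open>odd L\<close> by simp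
qed

end

context mycielski_pair
begin

lemma pair_edge_layer_le: "pair_edge g j i g' j' i' \<Longrightarrow> j' \<le> Suc j"
  unfolding pair_edge_def pair_adj_def layer_adj_def by auto

lemma pair_edge_parity:
  "pair_edge g j i g' j' i' \<Longrightarrow> g \<le> 1 \<Longrightarrow> g' \<le> 1 \<Longrightarrow> \<not> (j = 0 \<and> j' = 0) \<Longrightarrow>
    even (g + j) \<noteq> even (g' + j')"
  unfolding pair_edge_def pair_adj_def layer_adj_def by auto

lemma pair_edge_cyc_adj: "pair_edge g j i g' j' i' \<Longrightarrow> j \<le> s \<Longrightarrow> j' \<le> s \<Longrightarrow> cyc_adj i i'"
  unfolding pair_edge_def pair_adj_def layer_adj_def using cyc_adj_sym by (auto simp: cyc_adj_def)

lemma pair_edge_apex_twin: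
  "pair_edge g j i g' j' i' \<Longrightarrow> j = Suc s \<Longrightarrow> j' \<le> s \<Longrightarrow> g' = g \<and> j' = s \<and> i' = i"
  unfolding pair_edge_def pair_adj_def layer_adj_def by auto

lemma apex_layer_neighbour_unique:
  assumes "edge x u" "edge x w" "layer_of x = Suc s" "layer_of u \<le> s" "layer_of w \<le> s"
  shows "u = w"
proof (rule coords_inj)
  show "coords u = coords w"
    using pair_edge_apex_twin[OF edge_pair_edge[OF assms(1)] assms(3,4)]
      pair_edge_apex_twin[OF edge_pair_edge[OF assms(2)] assms(3,5)]
    unfolding coords_def by simp
qed

lemma walk_layer_dist:
  assumes walk: "\<And>k. edge (v k) (v (Suc k))"
  shows "layer_of (v (k + t)) \<le> layer_of (v k) + t" "layer_of (v k) \<le> layer_of (v (k + t)) + t"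
proof -
  have up: "layer_of (v (Suc k)) \<le> Suc (layer_of (v k))" for k
    using pair_edge_layer_le[OF edge_pair_edge[OF walk]] .
  have down: "layer_of (v k) \<le> Suc (layer_of (v (Suc k)))" for k
    using pair_edge_layer_le[OF edge_pair_edge[OF edge_sym[OF walk]]] .
  show "layer_of (v (k + t)) \<le> layer_of (v k) + t"
  proof (induction t)
    case (Suc t)
    then show ?case using up[of "k + t"] by simp
  qed simp
  show "layer_of (v k) \<le> layer_of (v (k + t)) + t"
  proof (induction t)
    case (Suc t)
    then show ?case using down[of "k + t"] by simp
  qed simp
qed

lemma closed_walk_meets_base_edge:
  assumes walk: "\<And>k. edge (v k) (v (Suc k))" and per: "\<And>k. v (k mod L) = v k" and "odd L"
  shows "\<exists>k. layer_of (v k) = 0 \<and> layer_of (v (Suc k)) = 0"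
proof (rule ccontr)
  assume no_base: "\<not> ?thesis"
  define p where "p k \<longleftrightarrow> even (copy_of (v k) + layer_of (v k))" for k
  have "p (Suc k) \<longleftrightarrow> \<not> p k" for k
    using pair_edge_parity[OF edge_pair_edge[OF walk]] vertex_bounds(1)[OF edge_lt[OF walk]]
      vertex_bounds(1)[OF edge_lt[OF edge_sym[OF walk]]] no_base
    unfolding p_def by blast
  moreover have "p L = p 0"
    using per[of L] per[of 0] unfolding p_def by simp
  ultimately have "even L" by (rule alternating_even_period)
  then show False using \<open>odd L\<close> by simp
qed

lemma closed_walk_meets_apex_layer:
  assumes walk: "\<And>k. edge (v k) (v (Suc k))" and per: "\<And>k. v (k mod L) = v k"
    and "odd L" "L < m"
  shows "\<exists>k. layer_of (v k) = Suc s"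
proof (rule ccontr)
  assume "\<not> ?thesis"
  then have below: "layer_of (v k) \<le> s" for k
    using vertex_bounds(2)[OF edge_lt[OF walk]] le_Suc_eq by blast
  have "m \<le> L"
  proof (rule odd_closed_walk_length)
    show "cyc_adj (index_of (v k)) (index_of (v (Suc k)))" for k
      using pair_edge_cyc_adj[OF edge_pair_edge[OF walk] below below] .
    show "index_of (v k) < m" for k
      using vertex_bounds(3)[OF edge_lt[OF walk]] .
    show "index_of (v L) = index_of (v 0)"
      using per[of L] per[of 0] by simp
  qed fact
  then show False using \<open>L < m\<close> by simp
qed

text \<open>The two arcs of the cycle between a base edge and an apex-layer vertex have length at least
  \<open>s + 1\<close> each; if both have length exactly \<open>s + 1\<close>, the cycle enters and leaves the apex layer
  through the same twin.\<close>
lemma odd_cycle_through_apex_layer: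
  assumes walk: "\<And>k. edge (v k) (v (Suc k))" and per: "\<And>k. v (k mod L) = v k"
    and inj: "\<And>a b. v a = v b \<Longrightarrow> a mod L = b mod L" and "3 \<le> L" "odd L"
    and base: "layer_of (v k0) = 0" "layer_of (v (Suc k0)) = 0"
    and apex: "layer_of (v k) = Suc s" "k0 < k" "k < k0 + L"
  shows "2 * s + 5 \<le> L"
proof (rule ccontr)
  assume "\<not> 2 * s + 5 \<le> L"
  have "v (k0 + L) = v k0" using per[of "k0 + L"] per[of k0] by simp
  then have base': "layer_of (v (k0 + L)) = 0" using base by simp
  have "k \<noteq> Suc k0" using apex(1) base(2) by auto
  then have "Suc k0 < k" using apex(2) by linarith
  define a where "a = k - Suc k0"
  define b where "b = k0 + L - k"
  have k_a: "k = Suc k0 + a" and k_b: "k + b = k0 + L"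
    using \<open>Suc k0 < k\<close> apex(3) unfolding a_def b_def by auto
  have L_ab: "L = Suc (a + b)" using k_a k_b by linarith
  have "Suc s \<le> a" using walk_layer_dist(1)[of v, OF walk, of "Suc k0" a] k_a base apex by simp
  moreover have "Suc s \<le> b" using walk_layer_dist(2)[of v, OF walk, of k b] k_b base' apex by simp
  moreover have "even (a + b)" using L_ab \<open>odd L\<close> by simp
  moreover have "a + b < 2 * s + 4" using L_ab \<open>\<not> 2 * s + 5 \<le> L\<close> by simp
  ultimately have "a + b = 2 * s + 2" by presburger
  then have "a = Suc s" "b = Suc s" using \<open>Suc s \<le> a\<close> \<open>Suc s \<le> b\<close> by simp_all
  then have k: "k = Suc (Suc k0 + s)" "k0 + L = Suc k + s" using k_a k_b by simp_all
  have "layer_of (v (Suc k0 + s)) \<le> s"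
    using walk_layer_dist(1)[of v, OF walk, of "Suc k0" s] base by simp
  moreover have "layer_of (v (Suc k)) \<le> s"
    using walk_layer_dist(2)[of v, OF walk, of "Suc k" s] k(2) base' by simp
  moreover have "edge (v k) (v (Suc k0 + s))" using edge_sym[OF walk] k(1) by simp
  ultimately have "v (Suc k0 + s) = v (Suc k)"
    using apex_layer_neighbour_unique[OF _ walk apex(1)] by blast
  then have "(Suc k0 + s) mod L = Suc k mod L" by (rule inj)
  then have "L dvd 2" using mod_eq_dvd_iff_nat[of "Suc k0 + s" "Suc k" L] k(1) by simp
  then show False using dvd_imp_le[of L 2] \<open>3 \<le> L\<close> by simp
qed

lemma short_odd_cycle_length:
  assumes walk: "\<And>k. edge (v k) (v (Suc k))" and per: "\<And>k. v (k mod L) = v k"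
    and inj: "\<And>a b. v a = v b \<Longrightarrow> a mod L = b mod L" and "3 \<le> L" "odd L" "L < m"
  shows "2 * s + 5 \<le> L"
proof -
  have "0 < L" using \<open>3 \<le> L\<close> by simp
  obtain k0' where "layer_of (v k0') = 0" "layer_of (v (Suc k0')) = 0"
    using closed_walk_meets_base_edge[OF walk per \<open>odd L\<close>] by blast
  moreover have "v (k0' mod L) = v k0'" "v (Suc (k0' mod L)) = v (Suc k0')"
    using per[of k0'] per[of "Suc k0'"] per[of "Suc (k0' mod L)"] by (simp_all add: mod_Suc_eq)
  ultimately have base: "layer_of (v (k0' mod L)) = 0" "layer_of (v (Suc (k0' mod L))) = 0"
    by simp_all
  obtain k1 where "layer_of (v k1) = Suc s"
    using closed_walk_meets_apex_layer[OF walk per \<open>odd L\<close> \<open>L < m\<close>] by blast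
  then have apex: "layer_of (v (k1 mod L)) = Suc s" using per by simp
  define k where "k = (if k0' mod L < k1 mod L then k1 mod L else k1 mod L + L)"
  have "v k = v (k1 mod L)" using per[of "k1 mod L + L"] per[of "k1 mod L"] unfolding k_def by simp
  moreover have "k0' mod L < k" "k < k0' mod L + L"
  proof -
    have lt: "k1 mod L < L" "k0' mod L < L" "k1 mod L \<noteq> k0' mod L"
      using \<open>0 < L\<close> apex base by auto
    show "k0' mod L < k" "k < k0' mod L + L"
      unfolding k_def using lt by (cases "k0' mod L < k1 mod L"; simp only: if_True if_False; linarith)+
  qed
  ultimately show ?thesis
    using odd_cycle_through_apex_layer[OF walk per inj \<open>3 \<le> L\<close> \<open>odd L\<close> base, of k] apex by simp
qed

lemma odd_girth_gt:
  assumes "l < m" "l < 2 * s + 5"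
  shows "odd_girth_gt nverts edge l"
  unfolding odd_girth_gt_def
proof (intro allI impI)
  fix cs assume "is_cycle nverts edge cs \<and> odd (length cs)"
  then have cyc: "is_cycle nverts edge cs" and "odd (length cs)" by auto
  show "l < length cs"
  proof (rule ccontr)
    assume "\<not> l < length cs"
    have "2 * s + 5 \<le> length cs"
    proof (rule short_odd_cycle_length)
      show "edge (cycle_walk cs k) (cycle_walk cs (Suc k))" for k
        using is_cycle_walk_edge[OF cyc] .
      show "cycle_walk cs a = cycle_walk cs b \<Longrightarrow> a mod length cs = b mod length cs" for a b
        using is_cycle_walk_eq[OF cyc] .
      show "3 \<le> length cs" using cyc unfolding is_cycle_def by simp
      show "length cs < m" using assms(1) \<open>\<not> l < length cs\<close> by simp
    qed (fact cycle_walk_mod \<open>odd (length cs)\<close>)+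
    then show False using assms(2) \<open>\<not> l < length cs\<close> by simp
  qed
qed

end

section \<open>Edge density\<close>

lemma num_edges_le: "real (num_edges n E) \<le> (real n)^2"
proof -
  have "{(u, v). u < v \<and> v < n \<and> E u v} \<subseteq> {..<n} \<times> {..<n}" by auto
  then have "num_edges n E \<le> card ({..<n} \<times> {..<n})"
    unfolding num_edges_def by (rule card_mono[rotated]) simp
  then show ?thesis by (simp add: card_cartesian_product power2_eq_square flip: of_nat_mult)
qed

lemma le_density_const:
  assumes "\<And>N. \<exists>n\<ge>N. 0 < n \<and>
    (\<exists>E. critical k n E \<and> odd_girth_gt n E l \<and> a * (real n)^2 \<le> real (num_edges n E))"
  shows "a \<le> density_const l k"
proof -
  define S where "S = {c :: real. \<forall>N. \<exists>n\<ge>N. \<exists>E.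
      critical k n E \<and> odd_girth_gt n E l \<and> real (num_edges n E) > c * (real n)^2}"
  have below: "c \<in> S" if "c < a" for c
    unfolding S_def
  proof (intro CollectI allI)
    fix N
    obtain n E where n: "N \<le> n" "0 < n" and E: "critical k n E" "odd_girth_gt n E l"
      and many_edges: "a * (real n)^2 \<le> real (num_edges n E)"
      using assms by blast
    have "c * (real n)^2 < a * (real n)^2"
      using \<open>c < a\<close> n(2) by (intro mult_strict_right_mono) simp_all
    then have "real (num_edges n E) > c * (real n)^2" using many_edges by linarith
    then show "\<exists>n\<ge>N. \<exists>E. critical k n E \<and> odd_girth_gt n E l \<and> real (num_edges n E) > c * (real n)^2"
      using n E by blast
  qed
  have "bdd_above S"
  proof (rule bdd_aboveI)
    fix c assume "c \<in> S"
    then obtain n E where "1 \<le> n" "c * (real n)^2 < real (num_edges n E)"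
      unfolding S_def by blast
    then have "c * (real n)^2 < 1 * (real n)^2" using num_edges_le[of n E] by linarith
    then have "c < 1" by (rule mult_right_less_imp_less) simp
    then show "c \<le> 1" by simp
  qed
  have "a \<le> Sup S"
  proof (rule dense_le)
    show "c \<le> Sup S" if "c < a" for c
      by (rule cSup_upper[OF below[OF that] \<open>bdd_above S\<close>])
  qed
  then show ?thesis unfolding density_const_def S_def .
qed

context mycielski_pair
begin

lemma num_edges_ge: "m * m \<le> num_edges nverts edge"
proof -
  let ?f = "\<lambda>(i, k). (vertex 0 (Suc s) i, vertex 1 (Suc s) k)"
  let ?B = "{(u, v). u < v \<and> v < nverts \<and> edge u v}"
  have "inj_on ?f ({..<m} \<times> {..<m})"
    by (rule inj_onI) (auto dest: arg_cong[where f = index_of] simp: vertex_coords)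
  moreover have "?f ` ({..<m} \<times> {..<m}) \<subseteq> ?B"
  proof clarify
    fix i k assume "i < m" "k < m"
    have "vertex 0 (Suc s) i < copy_size"
      using offset_in_copy[of "Suc s" i] \<open>i < m\<close> unfolding vertex_def by simp
    then have "vertex 0 (Suc s) i < vertex 1 (Suc s) k" unfolding vertex_def by simp
    moreover have "edge (vertex 0 (Suc s) i) (vertex 1 (Suc s) k)"
      using edge_vertex[of 0 1 "Suc s" "Suc s" i k] \<open>i < m\<close> \<open>k < m\<close>
      unfolding pair_edge_def pair_adj_def by simp
    ultimately show "vertex 0 (Suc s) i < vertex 1 (Suc s) k \<and> vertex 1 (Suc s) k < nverts \<and>
        edge (vertex 0 (Suc s) i) (vertex 1 (Suc s) k)"
      using vertex_lt_nverts[of 1 "Suc s" k] \<open>k < m\<close> by simp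
  qed
  moreover have "finite ?B"
    by (rule finite_subset[of _ "{..<nverts} \<times> {..<nverts}"]) auto
  ultimately have "card ({..<m} \<times> {..<m}) \<le> card ?B"
    by (rule card_inj_on_le)
  then show ?thesis unfolding num_edges_def by (simp add: card_cartesian_product)
qed

lemma nverts_sq_le: "(real nverts)^2 \<le> (2 * real s + 4)^2 * real (num_edges nverts edge)"
proof -
  have "(real nverts)^2 = (2 * real s + 4)^2 * (real m * real m)"
    unfolding nverts_eq by (simp add: power2_eq_square algebra_simps)
  also have "\<dots> \<le> (2 * real s + 4)^2 * real (num_edges nverts edge)"
    using num_edges_ge by (intro mult_left_mono) (simp_all flip: of_nat_mult)
  finally show ?thesis .
qed

end

theorem theorem3:
  fixes l :: nat
  assumes "l \<ge> 3"
  shows "density_const l 4 \<ge> 1 / (real l + 1)^2"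
proof (rule le_density_const)
  fix N
  define s where "s = (l - 3) div 2"
  define m where "m = 2 * (N + l) + 5"
  interpret mycielski_pair m s
    by unfold_locales (auto simp: m_def)
  have "2 * real s + 4 \<le> real l + 1" and "l < 2 * s + 5"
    using assms unfolding s_def by linarith+
  then have "1 / (real l + 1)^2 * (real nverts)^2 \<le> (real nverts)^2 / (2 * real s + 4)^2"
    by (simp add: frac_le power_mono)
  also have "\<dots> \<le> real (num_edges nverts edge)"
    using nverts_sq_le by (simp add: pos_divide_le_eq mult.commute)
  finally have many_edges: "1 / (real l + 1)^2 * (real nverts)^2 \<le> real (num_edges nverts edge)" .
  moreover have "N \<le> nverts" "0 < nverts" "l < m"
    unfolding nverts_eq by (simp_all add: m_def)
  ultimately show "\<exists>n\<ge>N. 0 < n \<and> (\<exists>E. critical 4 n E \<and> odd_girth_gt n E l \<and>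
      1 / (real l + 1)^2 * (real n)^2 \<le> real (num_edges n E))"
    using critical_4 odd_girth_gt \<open>l < 2 * s + 5\<close> many_edges by blast
qed

end
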